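(* There is $d_0$ such that for all $d\ge d_0$, $A_{d,2d}\big(t\mapsto\psi_{3d}(\sqrt d\,t)\big)\ge\frac{1}{5e\pi}$.
   Context: $\mu_d$ is the probability measure on $[-1,1]$ with density $\frac{\Gamma(d/2)}{\sqrt\pi\,\Gamma((d-1)/2)}(1-t^2)^{(d-3)/2}$. $A_{d,n}(g)=\min_p\|g-p\|_{L^2(\mu_d)}$ over polynomials $p$ of degree less than $n$. The sawtooth $\psi_n:\mathbb{R}\to[-1,1]$ is $\psi_n(t)=-2n[t+1]_++2n[t-1]_++4n\sum_{j=1}^n\big((-1)^{j+n+1}[t-\tfrac{2j-1}{2n}]_++(-1)^{j+n}[t+\tfrac{2j-1}{2n}]_+\big)$ ($n$ cycles in $[-1,1]$, zero outside). *)

theory Defs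
  imports "HOL-Analysis.Analysis" "HOL-Computational_Algebra.Polynomial"
begin

definition pos_part :: "real \<Rightarrow> real" where
  "pos_part x = max x 0"

definition mu_dens :: "nat \<Rightarrow> real \<Rightarrow> real" where
  "mu_dens d t = Gamma (real d / 2) / (sqrt pi * Gamma ((real d - 1) / 2))
                 * (1 - t\<^sup>2) powr ((real d - 3) / 2)"

definition mu :: "nat \<Rightarrow> real measure" where
  "mu d = density lborel (\<lambda>t. ennreal (indicator {-1..1} t * mu_dens d t))"

definition A :: "nat \<Rightarrow> nat \<Rightarrow> (real \<Rightarrow> real) \<Rightarrow> real" where
  "A d n g = (INF p \<in> {p :: real poly. degree p < n}.
                sqrt (integral\<^sup>L (mu d) (\<lambda>t. (g t - poly p t)\<^sup>2)))"

definition psi :: "nat \<Rightarrow> real \<Rightarrow> real" where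
  "psi n t = - 2 * real n * pos_part (t + 1) + 2 * real n * pos_part (t - 1)
     + 4 * real n * (\<Sum>j=1..n.
         (-1) ^ (j + n + 1) * pos_part (t - (2 * real j - 1) / (2 * real n))
       + (-1) ^ (j + n) * pos_part (t + (2 * real j - 1) / (2 * real n)))"

end

theory Submission
  imports Defs
begin

(* The nodes b_m = (2m - 1)/(2n) of the sawtooth satisfy psi n b_m = (-1)^(m + n), and psi n is
   affine between consecutive nodes. For n = 3d the function t -> psi n (sqrt d * t) therefore
   performs n - 1 full oscillations -1, 1, -1 inside [-1/sqrt d, 1/sqrt d], where the density of
   mu_d is at least C_d/2 with C_d >= sqrt (d / (8 pi)) (log-convexity of Gamma). A polynomial of
   degree < 2d has at most 2d - 2 critical points, so it is monotone on at least d + 1 of these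
   periods, and on each of them it misses the sawtooth by at least 1/2 on a subinterval of length
   1/(4 n sqrt d). Hence the squared L2(mu_d) distance is at least
   d * (C_d/2) * (1/4) / (12 d sqrt d) >= 1/(96 sqrt (8 pi)) > 1/(5 e pi)^2. *)

section \<open>The sawtooth at its nodes\<close>

lemma pos_part_convex_combination:
  fixes x y l c :: real
  assumes "0 \<le> l" "l \<le> 1" "x \<le> y" "y \<le> c \<or> c \<le> x"
  shows "pos_part ((1 - l) * x + l * y - c) = (1 - l) * pos_part (x - c) + l * pos_part (y - c)"
proof -
  have eq: "(1 - l) * x + l * y - c = (1 - l) * (x - c) + l * (y - c)"
    by (simp add: algebra_simps)
  consider "y \<le> c" | "c \<le> x" using assms(4) by blast
  then show ?thesis
  proof cases
    case 1
    then have "(1 - l) * (x - c) \<le> 0" "l * (y - c) \<le> 0"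
      using assms by (auto intro: mult_nonneg_nonpos)
    then show ?thesis using 1 assms unfolding eq pos_part_def by auto
  next
    case 2
    then have "(1 - l) * (x - c) \<ge> 0" "l * (y - c) \<ge> 0"
      using assms by auto
    then show ?thesis using 2 assms unfolding eq pos_part_def by auto
  qed
qed

definition psi_node :: "nat \<Rightarrow> int \<Rightarrow> real" where
  "psi_node n m = (2 * real_of_int m - 1) / (2 * real n)"

lemma psi_node_Suc: "n \<ge> 1 \<Longrightarrow> psi_node n (m + 1) = psi_node n m + 1 / real n"
  unfolding psi_node_def by (simp add: field_simps)

(* The kinks of psi n are the points r/(2n) with r = -2n, 2n, 2j - 1 or 1 - 2j. *)
lemma kink_not_between_nodes:
  fixes r m :: int
  assumes "n \<ge> 1" "r \<noteq> 2 * m"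
  shows "psi_node n (m + 1) \<le> r / (2 * real n) \<or> r / (2 * real n) \<le> psi_node n m"
proof -
  have "2 * (m + 1) - 1 \<le> r \<or> r \<le> 2 * m - 1" using assms(2) by presburger
  then have "real_of_int (2 * (m + 1) - 1) \<le> r \<or> r \<le> real_of_int (2 * m - 1)"
    by (simp only: of_int_le_iff)
  then show ?thesis unfolding psi_node_def using assms(1)
    by (auto intro: divide_right_mono)
qed

lemma psi_affine_between_nodes:
  assumes n: "n \<ge> 1" and m: "1 - int n \<le> m" "m \<le> int n - 1"
    and l: "0 \<le> l" "l \<le> 1"
  shows "psi n ((1 - l) * psi_node n m + l * psi_node n (m + 1))
       = (1 - l) * psi n (psi_node n m) + l * psi n (psi_node n (m + 1))"
proof -
  define x where "x = psi_node n m"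
  define y where "y = psi_node n (m + 1)"
  have xy: "x \<le> y" unfolding x_def y_def psi_node_Suc[OF n] by simp
  have hinge: "pos_part ((1 - l) * x + l * y - r / (2 * real n))
      = (1 - l) * pos_part (x - r / (2 * real n)) + l * pos_part (y - r / (2 * real n))"
    if "r \<noteq> 2 * m" for r :: int
    using pos_part_convex_combination[OF l xy] kink_not_between_nodes[OF n that] unfolding x_def y_def
    by blast
  have ne: "- 2 * int n \<noteq> 2 * m" "2 * int n \<noteq> 2 * m"
    "2 * int j - 1 \<noteq> 2 * m" "1 - 2 * int j \<noteq> 2 * m" for j :: nat
    using m by presburger+
  have plus_kink: "w + (2 * real j - 1) / (2 * real n) = w - real_of_int (1 - 2 * int j) / (2 * real n)"
    for w :: real and j :: nat
    by (simp add: diff_divide_distrib)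
  let ?z = "(1 - l) * x + l * y"
  have hinges: "pos_part (?z + 1) = (1 - l) * pos_part (x + 1) + l * pos_part (y + 1)"
    "pos_part (?z - 1) = (1 - l) * pos_part (x - 1) + l * pos_part (y - 1)"
    "pos_part (?z - (2 * real j - 1) / (2 * real n))
       = (1 - l) * pos_part (x - (2 * real j - 1) / (2 * real n))
         + l * pos_part (y - (2 * real j - 1) / (2 * real n))" for j
    using hinge[OF ne(1)] hinge[OF ne(2)] hinge[OF ne(3)] n by (simp_all add: diff_divide_distrib)
  have hinges_plus: "pos_part (?z + (2 * real j - 1) / (2 * real n))
       = (1 - l) * pos_part (x + (2 * real j - 1) / (2 * real n))
         + l * pos_part (y + (2 * real j - 1) / (2 * real n))" for j
    unfolding plus_kink using hinge[OF ne(4)] .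
  define kinks where "kinks w = (\<Sum>j=1..n.
      (-1) ^ (j + n + 1) * pos_part (w - (2 * real j - 1) / (2 * real n))
      + (-1) ^ (j + n) * pos_part (w + (2 * real j - 1) / (2 * real n)))" for w
  have kinks_affine: "kinks ?z = (1 - l) * kinks x + l * kinks y"
    unfolding kinks_def sum_distrib_left sum.distrib[symmetric]
    by (rule sum.cong[OF refl]) (unfold hinges hinges_plus, simp add: algebra_simps)
  show ?thesis
    unfolding x_def[symmetric] y_def[symmetric] psi_def kinks_def[symmetric]
    unfolding kinks_affine hinges by (simp add: algebra_simps)
qed

(* n * (pos_part (b_m + c_j) - pos_part (b_m - c_j)) for the node b_m = psi_node n m
   and the kink c_j = (2j - 1)/(2n). *)
definition node_hinge_diff :: "int \<Rightarrow> nat \<Rightarrow> int" where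
  "node_hinge_diff m j = max (m + int j - 1) 0 - max (m - int j) 0"

lemma alternating_node_hinge_diff_sum_high:
  "int M \<le> m \<Longrightarrow> (\<Sum>j=1..M. (-1)^j * node_hinge_diff m j) = (-1)^M * int M"
proof (induction M)
  case (Suc M)
  then have "node_hinge_diff m (Suc M) = 2 * int M + 1" unfolding node_hinge_diff_def by simp
  with Suc show ?case by (simp add: algebra_simps)
qed simp

lemma alternating_node_hinge_diff_sum_low:
  "int M \<le> 1 - m \<Longrightarrow> (\<Sum>j=1..M. (-1)^j * node_hinge_diff m j) = 0"
proof (induction M)
  case (Suc M)
  then have "node_hinge_diff m (Suc M) = 0" unfolding node_hinge_diff_def by simp
  with Suc show ?case by simp
qed simp

lemma alternating_node_hinge_diff_sum:
  "m \<le> int N \<Longrightarrow> 1 - m \<le> int N \<Longrightarrow>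
    4 * (-1)^N * (\<Sum>j=1..N. (-1)^j * node_hinge_diff m j) = (-1)^nat (m + int N) + 2*m - 1 + 2 * int N"
proof (induction N)
  case (Suc N)
  show ?case
  proof (cases "m \<le> int N \<and> 1 - m \<le> int N")
    case True
    then have "node_hinge_diff m (Suc N) = m + int N"
      and "nat (m + int (Suc N)) = Suc (nat (m + int N))"
      unfolding node_hinge_diff_def by auto
    with True Suc.IH show ?thesis by (simp add: algebra_simps)
  next
    case False
    then consider "int (Suc N) = m" | "int (Suc N) = 1 - m" using Suc.prems by linarith
    then show ?thesis
    proof cases
      case 1
      then have "nat (m + int (Suc N)) = 2 * Suc N" by simp
      with 1 alternating_node_hinge_diff_sum_high[of "Suc N" m] show ?thesis
        by (simp add: power_mult_distrib[symmetric] power_add[symmetric])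
    next
      case 2
      then have "nat (m + int (Suc N)) = 1" by simp
      with 2 alternating_node_hinge_diff_sum_low[of "Suc N" m] show ?thesis by simp
    qed
  qed
qed simp

lemma psi_at_node:
  assumes n: "n \<ge> 1" and m: "1 - int n \<le> m" "m \<le> int n"
  shows "psi n (psi_node n m) = (-1)^nat (m + int n)"
proof -
  define u where "u = psi_node n m"
  have np: "real n > 0" using n by simp
  have outer: "pos_part (u + 1) = u + 1" "pos_part (u - 1) = 0"
  proof -
    have "- 2 * real n \<le> 2 * real_of_int m - 1" "2 * real_of_int m - 1 \<le> 2 * real n"
      using m by linarith+
    then have "-1 \<le> u" "u \<le> 1" unfolding u_def psi_node_def using np by (simp_all add: field_simps)
    then show "pos_part (u + 1) = u + 1" "pos_part (u - 1) = 0" unfolding pos_part_def by simp_all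
  qed
  have pos_part_of_int: "pos_part (real_of_int k / real n) = real_of_int (max k 0) / real n" for k
    using np unfolding pos_part_def by (auto simp: max_def field_simps)
  have inner: "(-1) ^ (j + n + 1) * pos_part (u - (2 * real j - 1) / (2 * real n))
       + (-1) ^ (j + n) * pos_part (u + (2 * real j - 1) / (2 * real n))
       = (-1)^n / real n * ((-1)^j * real_of_int (node_hinge_diff m j))" for j
  proof -
    have at_node: "u - (2 * real j - 1) / (2 * real n) = real_of_int (m - int j) / real n"
      "u + (2 * real j - 1) / (2 * real n) = real_of_int (m + int j - 1) / real n"
      unfolding u_def psi_node_def using np by (simp_all add: field_simps)
    show ?thesis unfolding at_node pos_part_of_int node_hinge_diff_def
      by (simp add: power_add field_simps) (simp add: diff_divide_distrib)
  qed
  have "real_of_int (4 * (-1)^n * (\<Sum>j=1..n. (-1)^j * node_hinge_diff m j))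
      = real_of_int ((-1)^nat (m + int n) + 2*m - 1 + 2 * int n)"
    using alternating_node_hinge_diff_sum[of m n] m by simp
  then have sum: "4 * (-1)^n * (\<Sum>j=1..n. (-1)^j * real_of_int (node_hinge_diff m j))
      = (-1)^nat (m + int n) + 2 * real_of_int m - 1 + 2 * real n"
    by simp
  have "psi n u = - 2 * real n * (u + 1)
      + 4 * (-1)^n * (\<Sum>j=1..n. (-1)^j * real_of_int (node_hinge_diff m j))"
    unfolding psi_def outer inner sum_distrib_left[symmetric] using np by simp
  also have "\<dots> = (-1)^nat (m + int n)"
    unfolding sum u_def psi_node_def using np by (simp add: field_simps)
  finally show ?thesis unfolding u_def .
qed

lemma psi_between_nodes:
  assumes n: "n \<ge> 1" and m: "1 - int n \<le> m" "m \<le> int n - 1"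
    and u: "psi_node n m \<le> u" "u \<le> psi_node n m + 1 / real n"
  shows "(-1)^nat (m + int n) * psi n u = 1 - 2 * real n * (u - psi_node n m)"
proof -
  define l where "l = real n * (u - psi_node n m)"
  define \<sigma> :: real where "\<sigma> = (-1)^nat (m + int n)"
  have np: "real n > 0" using n by simp
  have l: "0 \<le> l" "l \<le> 1" unfolding l_def using u np by (auto simp: field_simps)
  have u_eq: "u = (1 - l) * psi_node n m + l * psi_node n (m + 1)"
    unfolding psi_node_Suc[OF n] l_def using np by (simp add: field_simps)
  have "nat (m + 1 + int n) = Suc (nat (m + int n))" using m by linarith
  then have "psi n (psi_node n m) = \<sigma>" "psi n (psi_node n (m + 1)) = - \<sigma>"
    unfolding \<sigma>_def using psi_at_node[OF n] m by simp_all
  then have "\<sigma> * psi n u = (1 - 2 * l) * \<sigma>\<^sup>2"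
    unfolding u_eq psi_affine_between_nodes[OF n m l] by (simp add: algebra_simps power2_eq_square)
  also have "\<sigma>\<^sup>2 = 1" unfolding \<sigma>_def power2_eq_square by (simp add: power_mult_distrib[symmetric])
  finally show ?thesis unfolding \<sigma>_def l_def by simp
qed

lemma continuous_on_psi: "continuous_on S (psi n)"
  unfolding psi_def[abs_def] pos_part_def by (intro continuous_intros)

(* On [psi_cell n s k, psi_cell n s (Suc k)] the function t -> psi n (s * t) runs through one
   full period -1, 1, -1. *)
definition psi_cell :: "nat \<Rightarrow> real \<Rightarrow> nat \<Rightarrow> real" where
  "psi_cell n s k = psi_node n (2 * int k + 1 - int n) / s"

lemma psi_cell_Suc:
  "n \<ge> 1 \<Longrightarrow> s > 0 \<Longrightarrow> psi_cell n s (Suc k) = psi_cell n s k + 8 * (1 / (4 * real n * s))"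
  unfolding psi_cell_def psi_node_def by (simp add: field_simps)

lemma strict_mono_psi_cell: "n \<ge> 1 \<Longrightarrow> s > 0 \<Longrightarrow> strict_mono (psi_cell n s)"
  unfolding strict_mono_Suc_iff by (simp add: psi_cell_Suc)

lemma psi_cell_signs:
  assumes n: "n \<ge> 2" and k: "k \<le> n - 2" and s: "s > 0"
  defines "x \<equiv> psi_cell n s k" and "\<delta> \<equiv> 1 / (4 * real n * s)"
  shows "x \<le> t \<Longrightarrow> t \<le> x + \<delta> \<Longrightarrow> psi n (s * t) \<le> -1/2"
    and "x + 3*\<delta> \<le> t \<Longrightarrow> t \<le> x + 5*\<delta> \<Longrightarrow> psi n (s * t) \<ge> 1/2"
    and "x + 7*\<delta> \<le> t \<Longrightarrow> t \<le> x + 8*\<delta> \<Longrightarrow> psi n (s * t) \<le> -1/2"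
proof -
  define m where "m = 2 * int k + 1 - int n"
  define \<beta> where "\<beta> = psi_node n m"
  have n1: "n \<ge> 1" and np: "real n > 0" using n by simp_all
  have m: "1 - int n \<le> m" "m \<le> int n - 1" "1 - int n \<le> m + 1" "m + 1 \<le> int n - 1"
    unfolding m_def using k n by auto
  have "nat (m + int n) = 2 * k + 1" "nat (m + 1 + int n) = 2 * (k + 1)" unfolding m_def by auto
  then have signs: "(-1::real) ^ nat (m + int n) = -1" "(-1::real) ^ nat (m + 1 + int n) = 1"
    by (simp_all only: power_mult) simp_all
  have first_half: "psi n u = 2 * (real n * (u - \<beta>)) - 1"
    if "0 \<le> real n * (u - \<beta>)" "real n * (u - \<beta>) \<le> 1" for u
    using psi_between_nodes[OF n1 m(1,2), of u] that np unfolding signs \<beta>_def[symmetric]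
    by (simp add: field_simps)
  have second_half: "psi n u = 3 - 2 * (real n * (u - \<beta>))"
    if "1 \<le> real n * (u - \<beta>)" "real n * (u - \<beta>) \<le> 2" for u
  proof -
    have "psi n u = 1 - 2 * real n * (u - (\<beta> + 1 / real n))"
      using psi_between_nodes[OF n1 m(3,4), of u] that np
      unfolding signs psi_node_Suc[OF n1] \<beta>_def[symmetric] by (simp add: field_simps)
    then show ?thesis using np by (simp add: algebra_simps)
  qed
  have scaled: "x + c * \<delta> \<le> t \<longleftrightarrow> c/4 \<le> real n * (s * t - \<beta>)"
    "t \<le> x + c * \<delta> \<longleftrightarrow> real n * (s * t - \<beta>) \<le> c/4" for c
    using np s unfolding x_def \<delta>_def \<beta>_def m_def psi_cell_def by (simp_all add: field_simps)
  show "x \<le> t \<Longrightarrow> t \<le> x + \<delta> \<Longrightarrow> psi n (s * t) \<le> -1/2"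
    using first_half[of "s * t"] scaled[of 0] scaled[of 1] by simp
  show "x + 3*\<delta> \<le> t \<Longrightarrow> t \<le> x + 5*\<delta> \<Longrightarrow> psi n (s * t) \<ge> 1/2"
    using first_half[of "s * t"] second_half[of "s * t"] scaled[of 3] scaled[of 5] by linarith
  show "x + 7*\<delta> \<le> t \<Longrightarrow> t \<le> x + 8*\<delta> \<Longrightarrow> psi n (s * t) \<le> -1/2"
    using second_half[of "s * t"] scaled[of 7] scaled[of 8] by simp
qed

lemma psi_cell_in_bulk:
  assumes n: "n \<ge> 2" and k: "k \<le> n - 2" and s: "s > 0"
    and t: "psi_cell n s k \<le> t" "t \<le> psi_cell n s (Suc k)"
  shows "\<bar>s * t\<bar> \<le> 1"
proof -
  have np: "real n > 0" using n by simp
  have "-1 \<le> psi_node n (2 * int k + 1 - int n)" "psi_node n (2 * int (Suc k) + 1 - int n) \<le> 1"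
    unfolding psi_node_def using k n np by (simp_all add: field_simps)
  then have "-1 \<le> s * psi_cell n s k" "s * psi_cell n s (Suc k) \<le> 1"
    unfolding psi_cell_def using s by simp_all
  moreover have "s * psi_cell n s k \<le> s * t" "s * t \<le> s * psi_cell n s (Suc k)"
    using t s by simp_all
  ultimately show ?thesis by auto
qed

section \<open>Where a polynomial misses the sawtooth\<close>

lemma window_far_from_monotone:
  fixes g f :: "real \<Rightarrow> real"
  assumes \<delta>: "\<delta> > 0"
    and low_left: "\<And>t. \<beta> \<le> t \<Longrightarrow> t \<le> \<beta> + \<delta> \<Longrightarrow> g t \<le> -1/2"
    and high: "\<And>t. \<beta> + 3*\<delta> \<le> t \<Longrightarrow> t \<le> \<beta> + 5*\<delta> \<Longrightarrow> g t \<ge> 1/2"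
    and low_right: "\<And>t. \<beta> + 7*\<delta> \<le> t \<Longrightarrow> t \<le> \<beta> + 8*\<delta> \<Longrightarrow> g t \<le> -1/2"
    and mono: "mono_on {\<beta>..\<beta> + 8*\<delta>} f \<or> antimono_on {\<beta>..\<beta> + 8*\<delta>} f"
  shows "\<exists>a\<in>{\<beta>, \<beta> + 3*\<delta>, \<beta> + 4*\<delta>, \<beta> + 7*\<delta>}.
    \<forall>t. a < t \<and> t < a + \<delta> \<longrightarrow> 1/2 \<le> \<bar>g t - f t\<bar>"
  using mono
proof
  assume inc: "mono_on {\<beta>..\<beta> + 8*\<delta>} f"
  have le: "f t \<le> f u" if "\<beta> \<le> t" "t \<le> u" "u \<le> \<beta> + 8*\<delta>" for t u
    by (rule mono_onD[OF inc]) (use that in auto)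
  show ?thesis
  proof (cases "f (\<beta> + 5*\<delta>) \<le> 0")
    case True
    have "1/2 \<le> \<bar>g t - f t\<bar>" if "\<beta> + 4*\<delta> < t" "t < \<beta> + 4*\<delta> + \<delta>" for t
      using le[of t "\<beta> + 5*\<delta>"] high[of t] that \<delta> True by simp
    then show ?thesis by blast
  next
    case False
    have "1/2 \<le> \<bar>g t - f t\<bar>" if "\<beta> + 7*\<delta> < t" "t < \<beta> + 7*\<delta> + \<delta>" for t
      using le[of "\<beta> + 5*\<delta>" t] low_right[of t] that \<delta> False by simp
    then show ?thesis by blast
  qed
next
  assume dec: "antimono_on {\<beta>..\<beta> + 8*\<delta>} f"
  have ge: "f u \<le> f t" if "\<beta> \<le> t" "t \<le> u" "u \<le> \<beta> + 8*\<delta>" for t u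
    by (rule monotone_onD[OF dec]) (use that in auto)
  show ?thesis
  proof (cases "0 \<le> f (\<beta> + \<delta>)")
    case True
    have "1/2 \<le> \<bar>g t - f t\<bar>" if "\<beta> < t" "t < \<beta> + \<delta>" for t
      using ge[of t "\<beta> + \<delta>"] low_left[of t] that \<delta> True by simp
    then show ?thesis by blast
  next
    case False
    have "1/2 \<le> \<bar>g t - f t\<bar>" if "\<beta> + 3*\<delta> < t" "t < \<beta> + 3*\<delta> + \<delta>" for t
      using ge[of "\<beta> + \<delta>" t] high[of t] that \<delta> False by simp
    then show ?thesis by blast
  qed
qed

lemma psi_cell_window:
  fixes f :: "real \<Rightarrow> real"
  assumes n: "n \<ge> 2" and k: "k \<le> n - 2" and s: "s > 0"
    and mono: "mono_on {psi_cell n s k..psi_cell n s (Suc k)} f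
      \<or> antimono_on {psi_cell n s k..psi_cell n s (Suc k)} f"
  defines "\<delta> \<equiv> 1 / (4 * real n * s)"
  shows "\<exists>a. psi_cell n s k \<le> a \<and> a + \<delta> \<le> psi_cell n s (Suc k) \<and>
    (\<forall>t. a < t \<and> t < a + \<delta> \<longrightarrow> 1/2 \<le> \<bar>psi n (s * t) - f t\<bar>)"
proof -
  define x where "x = psi_cell n s k"
  have \<delta>: "\<delta> > 0" unfolding \<delta>_def using n s by simp
  have x_Suc: "psi_cell n s (Suc k) = x + 8 * \<delta>"
    unfolding x_def \<delta>_def using n s by (simp add: psi_cell_Suc)
  have "mono_on {x..x + 8*\<delta>} f \<or> antimono_on {x..x + 8*\<delta>} f"
    using mono unfolding x_Suc x_def .
  then have "\<exists>a\<in>{x, x + 3*\<delta>, x + 4*\<delta>, x + 7*\<delta>}.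
      \<forall>t. a < t \<and> t < a + \<delta> \<longrightarrow> 1/2 \<le> \<bar>psi n (s * t) - f t\<bar>"
    using window_far_from_monotone[where g = "\<lambda>t. psi n (s * t)", OF \<delta>]
      psi_cell_signs[OF n k s, folded x_def \<delta>_def] by blast
  then obtain a where "a \<in> {x, x + 3*\<delta>, x + 4*\<delta>, x + 7*\<delta>}"
    and "\<forall>t. a < t \<and> t < a + \<delta> \<longrightarrow> 1/2 \<le> \<bar>psi n (s * t) - f t\<bar>"
    by blast
  moreover from this(1) have "x \<le> a" "a + \<delta> \<le> x + 8 * \<delta>" using \<delta> by auto
  ultimately show ?thesis unfolding x_Suc x_def by blast
qed

lemma poly_monotone_without_critical_points:
  fixes p :: "real poly"
  assumes no_root: "\<And>x. a < x \<Longrightarrow> x < b \<Longrightarrow> poly (pderiv p) x \<noteq> 0"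
  shows "mono_on {a..b} (poly p) \<or> antimono_on {a..b} (poly p)"
proof -
  have "(\<forall>x. a < x \<and> x < b \<longrightarrow> poly (pderiv p) x \<ge> 0)
      \<or> (\<forall>x. a < x \<and> x < b \<longrightarrow> poly (pderiv p) x \<le> 0)"
  proof (rule ccontr)
    assume "\<not> ?thesis"
    then obtain x y where x: "a < x" "x < b" "poly (pderiv p) x < 0"
      and y: "a < y" "y < b" "poly (pderiv p) y > 0" by (auto simp: not_le)
    then have "x \<noteq> y" by auto
    with x y have "poly (pderiv p) (min x y) * poly (pderiv p) (max x y) < 0" "min x y < max x y"
      by (auto simp: min_def max_def mult_neg_pos mult_pos_neg)
    then obtain r where "min x y < r" "r < max x y" "poly (pderiv p) r = 0"
      using poly_IVT by blast
    then show False using no_root[of r] x y by auto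
  qed
  then show ?thesis
  proof
    assume nonneg: "\<forall>x. a < x \<and> x < b \<longrightarrow> poly (pderiv p) x \<ge> 0"
    have "poly p t \<le> poly p u" if "t \<in> {a..b}" "u \<in> {a..b}" "t \<le> u" for t u
    proof (rule DERIV_nonneg_imp_increasing_open[OF \<open>t \<le> u\<close>])
      fix z assume "t < z" "z < u"
      then show "\<exists>y. DERIV (poly p) z :> y \<and> 0 \<le> y"
        using nonneg that by (intro exI[of _ "poly (pderiv p) z"]) auto
    qed (intro continuous_intros)
    then have "mono_on {a..b} (poly p)" by (intro mono_onI)
    then show ?thesis ..
  next
    assume nonpos: "\<forall>x. a < x \<and> x < b \<longrightarrow> poly (pderiv p) x \<le> 0"
    have "poly p u \<le> poly p t" if "t \<in> {a..b}" "u \<in> {a..b}" "t \<le> u" for t u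
    proof (rule DERIV_nonpos_imp_decreasing_open[OF \<open>t \<le> u\<close>])
      fix z assume "t < z" "z < u"
      then show "\<exists>y. DERIV (poly p) z :> y \<and> y \<le> 0"
        using nonpos that by (intro exI[of _ "poly (pderiv p) z"]) auto
    qed (intro continuous_intros)
    then have "antimono_on {a..b} (poly p)" by (intro monotone_onI)
    then show ?thesis ..
  qed
qed

lemma poly_monotone_on_most_intervals:
  fixes p :: "real poly" and x :: "nat \<Rightarrow> real"
  assumes x: "strict_mono x"
  shows "K \<le> card {k \<in> {..<K}.
      mono_on {x k..x (Suc k)} (poly p) \<or> antimono_on {x k..x (Suc k)} (poly p)} + (degree p - 1)"
proof -
  define Good where
    "Good = {k \<in> {..<K}. mono_on {x k..x (Suc k)} (poly p) \<or> antimono_on {x k..x (Suc k)} (poly p)}"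
  define Bad where "Bad = {..<K} - Good"
  have "Good \<union> Bad = {..<K}" "Good \<inter> Bad = {}" unfolding Good_def Bad_def by auto
  then have "card Good + card Bad = K" by (metis card_Un_disjoint card_lessThan finite_Un finite_lessThan)
  moreover have "card Bad \<le> degree p - 1"
  proof (cases "pderiv p = 0")
    case True
    then obtain c where "poly p = (\<lambda>_. c)" using pderiv_iszero by fastforce
    then have "Bad = {}" unfolding Bad_def Good_def by (auto intro: mono_on_const)
    then show ?thesis by simp
  next
    case False
    have "\<exists>r. x k < r \<and> r < x (Suc k) \<and> poly (pderiv p) r = 0" if "k \<in> Bad" for k
      using poly_monotone_without_critical_points[of "x k" "x (Suc k)" p] that
      unfolding Bad_def Good_def by blast
    then obtain r
      where r: "\<And>k. k \<in> Bad \<Longrightarrow> x k < r k \<and> r k < x (Suc k) \<and> poly (pderiv p) (r k) = 0"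
      by metis
    have "strict_mono_on Bad r"
    proof (rule strict_mono_onI)
      fix k k' assume "k \<in> Bad" "k' \<in> Bad" "k < k'"
      then have "x (Suc k) \<le> x k'" using x by (simp add: strict_mono_less_eq)
      then show "r k < r k'" using r[OF \<open>k \<in> Bad\<close>] r[OF \<open>k' \<in> Bad\<close>] by linarith
    qed
    then have "card Bad \<le> card {r. poly (pderiv p) r = 0}"
      by (intro card_inj_on_le strict_mono_on_imp_inj_on poly_roots_finite False) (use r in auto)
    also have "\<dots> \<le> degree p - 1"
      using card_poly_roots_bound[OF False] by (simp add: degree_pderiv)
    finally show ?thesis .
  qed
  ultimately show ?thesis unfolding Good_def by linarith
qed

lemma psi_far_from_poly_on_many_windows:
  fixes p :: "real poly"
  assumes n: "n \<ge> 2" and s: "s > 0"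
  defines "\<delta> \<equiv> 1 / (4 * real n * s)"
  obtains S a where "S \<subseteq> {..<n - 1}" "n - 1 \<le> card S + (degree p - 1)"
    and "\<And>k. k \<in> S \<Longrightarrow> psi_cell n s k \<le> a k \<and> a k + \<delta> \<le> psi_cell n s (Suc k)"
    and "\<And>k t. k \<in> S \<Longrightarrow> a k < t \<Longrightarrow> t < a k + \<delta> \<Longrightarrow> 1/2 \<le> \<bar>psi n (s * t) - poly p t\<bar>"
proof -
  define S where "S = {k \<in> {..<n - 1}. mono_on {psi_cell n s k..psi_cell n s (Suc k)} (poly p)
    \<or> antimono_on {psi_cell n s k..psi_cell n s (Suc k)} (poly p)}"
  have "n - 1 \<le> card S + (degree p - 1)"
    unfolding S_def using n s by (intro poly_monotone_on_most_intervals strict_mono_psi_cell) auto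
  moreover have "\<exists>a. psi_cell n s k \<le> a \<and> a + \<delta> \<le> psi_cell n s (Suc k) \<and>
      (\<forall>t. a < t \<and> t < a + \<delta> \<longrightarrow> 1/2 \<le> \<bar>psi n (s * t) - poly p t\<bar>)" if "k \<in> S" for k
    using that n s unfolding S_def \<delta>_def by (intro psi_cell_window) auto
  then obtain a where "\<And>k. k \<in> S \<Longrightarrow> psi_cell n s k \<le> a k \<and> a k + \<delta> \<le> psi_cell n s (Suc k) \<and>
      (\<forall>t. a k < t \<and> t < a k + \<delta> \<longrightarrow> 1/2 \<le> \<bar>psi n (s * t) - poly p t\<bar>)"
    by metis
  ultimately show ?thesis using that[of S a] unfolding S_def by auto
qed

section \<open>The measure mu_d\<close>

definition mu_const :: "nat \<Rightarrow> real" where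
  "mu_const d = Gamma (real d / 2) / (sqrt pi * Gamma ((real d - 1) / 2))"

lemma mu_dens_eq: "mu_dens d t = mu_const d * (1 - t\<^sup>2) powr ((real d - 3) / 2)"
  unfolding mu_dens_def mu_const_def ..

lemma mu_const_pos: "d \<ge> 2 \<Longrightarrow> mu_const d > 0"
  unfolding mu_const_def by (intro divide_pos_pos mult_pos_pos Gamma_real_pos) auto

lemma mu_dens_nonneg: "d \<ge> 2 \<Longrightarrow> mu_dens d t \<ge> 0"
  unfolding mu_dens_eq using mu_const_pos by (simp add: less_imp_le)

lemma mu_const_lower_bound:
  assumes d: "d \<ge> 2"
  shows "sqrt (real d) / sqrt (8 * pi) \<le> mu_const d"
proof -
  define x where "x = (real d - 1) / 2"
  have x0: "x > 0" unfolding x_def using d by simp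
  have Gamma_pos: "Gamma (x + 1/2) > 0" "Gamma (x + 3/2) > 0" "Gamma (x + 1) > 0" "Gamma x > 0"
    using x0 by auto
  have Gamma_rec: "Gamma (z + 1) = z * Gamma z" if "z > 0" for z :: real
    using that by (intro Gamma_plus1) (auto dest: nonpos_Ints_nonpos)
  have "(ln \<circ> Gamma) ((1 - 1/2) *\<^sub>R (x + 1/2) + (1/2) *\<^sub>R (x + 3/2))
        \<le> (1 - 1/2) * (ln \<circ> Gamma) (x + 1/2) + (1/2) * (ln \<circ> Gamma) (x + 3/2)"
    by (rule convex_onD[OF log_convex_Gamma_real]) (use x0 in auto)
  moreover have "(1 - 1/2) *\<^sub>R (x + 1/2) + (1/2) *\<^sub>R (x + 3/2) = x + 1" by (simp add: field_simps)
  ultimately have "ln (Gamma (x + 1)) \<le> (ln (Gamma (x + 1/2)) + ln (Gamma (x + 3/2))) / 2"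
    by simp
  then have "2 * ln (Gamma (x + 1)) \<le> ln (Gamma (x + 1/2) * Gamma (x + 3/2))"
    using Gamma_pos by (simp add: ln_mult)
  then have "ln (Gamma (x + 1) ^ 2) \<le> ln (Gamma (x + 1/2) * Gamma (x + 3/2))"
    using Gamma_pos by (simp add: ln_realpow)
  then have "Gamma (x + 1) ^ 2 \<le> Gamma (x + 1/2) * Gamma (x + 3/2)"
    using Gamma_pos by (subst (asm) ln_le_cancel_iff) auto
  moreover have "Gamma (x + 1) = x * Gamma x" "Gamma (x + 3/2) = (x + 1/2) * Gamma (x + 1/2)"
    using Gamma_rec[of x] Gamma_rec[of "x + 1/2"] x0 by (simp_all add: add.assoc)
  moreover have "x + 1/2 = real d / 2" unfolding x_def by (simp add: field_simps)
  ultimately have Gamma_ratio: "x\<^sup>2 * Gamma x ^ 2 \<le> (real d / 2) * Gamma (real d / 2) ^ 2"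
    by (simp add: power_mult_distrib power2_eq_square algebra_simps)
  have "real d * real d \<le> (2 * (real d - 1)) * (2 * (real d - 1))"
    using d by (intro mult_mono) auto
  then have "real d / (8 * pi) \<le> x\<^sup>2 / (real d / 2 * pi)"
    using d unfolding x_def power2_eq_square by (simp add: field_simps)
  also have "\<dots> \<le> Gamma (real d / 2) ^ 2 / (pi * Gamma x ^ 2)"
    using Gamma_ratio Gamma_pos d by (simp add: field_simps)
  also have "\<dots> = mu_const d ^ 2" unfolding mu_const_def x_def by (simp add: power_divide power_mult_distrib)
  finally have "sqrt (real d / (8 * pi)) \<le> mu_const d"
    using mu_const_pos[OF d] by (simp add: real_le_lsqrt)
  then show ?thesis by (simp add: real_sqrt_divide)
qed

lemma mu_weight_lower_bound:
  assumes d: "d \<ge> 3" and t: "\<bar>sqrt (real d) * t\<bar> \<le> 1"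
  shows "mu_const d / 2 \<le> indicator {-1..1} t * mu_dens d t"
proof -
  define K where "K = d div 2"
  have "real d * t\<^sup>2 \<le> 1" using t d by (simp flip: abs_square_le_1 add: power_mult_distrib)
  then have t_bulk: "t\<^sup>2 \<le> 1 / real d" "t\<^sup>2 \<le> 1/3" "\<bar>t\<bar> \<le> 1"
    using d mult_right_mono[of 3 "real d" "t\<^sup>2"] by (simp_all flip: abs_square_le_1 add: field_simps)
  have "real d \<le> real (2 * K + 1)" "real (2 * K) \<le> real d"
    unfolding of_nat_le_iff K_def by presburger+
  then have K: "(real d - 3) / 2 \<le> real K" "2 * real K \<le> real d" by simp_all
  have "real K * t\<^sup>2 \<le> (real d / 2) * (1 / real d)"
    using K(2) t_bulk(1) by (intro mult_mono) auto
  then have "1/2 \<le> 1 - real K * t\<^sup>2" using d by simp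
  also have "\<dots> \<le> (1 - t\<^sup>2) ^ K"
    using Bernoulli_inequality[of "- t\<^sup>2" K] t_bulk(2) by simp
  also have "\<dots> = (1 - t\<^sup>2) powr real K" using t_bulk(2) by (simp add: powr_realpow)
  also have "\<dots> \<le> (1 - t\<^sup>2) powr ((real d - 3) / 2)"
    by (rule powr_mono') (use t_bulk(2) K(1) in auto)
  finally have "mu_const d / 2 \<le> mu_dens d t"
    unfolding mu_dens_eq using mu_const_pos[of d] d by (simp add: mult_left_mono)
  then show ?thesis using t_bulk(3) by (auto simp: indicator_def)
qed

lemma continuous_on_mu_dens:
  assumes d: "d \<ge> 4" shows "continuous_on {-1..1} (mu_dens d)"
proof -
  have "continuous_on {-1..1} (\<lambda>t::real. (1 - t\<^sup>2) powr ((real d - 3) / 2))"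
  proof (rule continuous_on_powr')
    show "\<forall>t::real\<in>{-1..1}. 0 \<le> 1 - t\<^sup>2 \<and> (1 - t\<^sup>2 = 0 \<longrightarrow> 0 < (real d - 3) / 2)"
      using d by (auto simp: abs_square_le_1)
  qed (intro continuous_intros)+
  then show ?thesis unfolding mu_dens_eq[abs_def] by (rule continuous_on_mult[OF continuous_on_const])
qed

lemma integral_mu_eq_lborel:
  assumes d: "d \<ge> 4" and f: "continuous_on UNIV f"
  shows "integrable lborel (\<lambda>t. indicator {-1..1} t * mu_dens d t * f t)"
    and "integral\<^sup>L (mu d) f = integral\<^sup>L lborel (\<lambda>t. indicator {-1..1} t * mu_dens d t * f t)"
proof -
  have "continuous_on {-1..1} (\<lambda>t. mu_dens d t * f t)"
    using continuous_on_mu_dens[OF d] continuous_on_subset[OF f] by (intro continuous_intros) auto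
  then have "integrable lborel (\<lambda>t. indicator {-1..1::real} t *\<^sub>R (mu_dens d t * f t))"
    by (intro borel_integrable_compact) auto
  then show "integrable lborel (\<lambda>t. indicator {-1..1} t * mu_dens d t * f t)"
    by (simp add: mult.assoc)
  have "mu_dens d \<in> borel_measurable borel" unfolding mu_dens_eq[abs_def] by measurable
  then have "integral\<^sup>L (mu d) f = integral\<^sup>L lborel (\<lambda>t. (indicator {-1..1} t * mu_dens d t) *\<^sub>R f t)"
    unfolding mu_def using borel_measurable_continuous_onI[OF f] mu_dens_nonneg[of d] d
    by (intro integral_density) auto
  then show "integral\<^sup>L (mu d) f = integral\<^sup>L lborel (\<lambda>t. indicator {-1..1} t * mu_dens d t * f t)"
    by simp
qed

lemma integral_lower_bound_on_windows:
  fixes F :: "real \<Rightarrow> real" and x a :: "nat \<Rightarrow> real"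
  assumes F: "integrable lborel F" "\<And>t. 0 \<le> F t"
    and S: "finite S" and \<delta>: "0 < \<delta>" and c: "0 \<le> c" and x: "mono x"
    and windows: "\<And>k. k \<in> S \<Longrightarrow> x k \<le> a k \<and> a k + \<delta> \<le> x (Suc k)"
    and lower: "\<And>k t. k \<in> S \<Longrightarrow> a k < t \<Longrightarrow> t < a k + \<delta> \<Longrightarrow> c \<le> F t"
  shows "real (card S) * c * \<delta> \<le> integral\<^sup>L lborel F"
proof -
  define W where "W k = {a k<..<a k + \<delta>}" for k
  define H where "H t = (\<Sum>k\<in>S. c * indicator (W k) t)" for t :: real
  have disjoint: "W k \<inter> W k' = {}" if "k \<in> S" "k' \<in> S" "k < k'" for k k'
  proof -
    have "x (Suc k) \<le> x k'" using x that(3) by (simp add: mono_def)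
    then show ?thesis using windows[OF that(1)] windows[OF that(2)] unfolding W_def by auto
  qed
  have integrable_W: "integrable lborel (\<lambda>t. c * indicator (W k) t)" for k
    unfolding W_def using \<delta> by (auto intro!: integrable_mult_right integrable_real_indicator)
  have "integral\<^sup>L lborel H = real (card S) * c * \<delta>"
    unfolding H_def using integrable_W \<delta> by (simp add: W_def Bochner_Integration.integral_sum)
  moreover have "H t \<le> F t" for t
  proof (cases "\<exists>k\<in>S. t \<in> W k")
    case True
    then obtain k where k: "k \<in> S" "t \<in> W k" by blast
    have "t \<notin> W k'" if "k' \<in> S - {k}" for k'
      using disjoint[of k k'] disjoint[of k' k] that k by (cases "k < k'") auto
    then have "(\<Sum>k'\<in>S - {k}. c * indicator (W k') t) = 0" by (intro sum.neutral) auto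
    then have "H t = c" unfolding H_def sum.remove[OF S k(1)] using k(2) by simp
    then show ?thesis using lower[OF k(1)] k(2) unfolding W_def by auto
  next
    case False
    then show ?thesis using F(2)[of t] unfolding H_def by simp
  qed
  then have "integral\<^sup>L lborel H \<le> integral\<^sup>L lborel F"
    unfolding H_def using integrable_W F(1) by (intro integral_mono) auto
  ultimately show ?thesis by simp
qed

lemma integral_mu_lower_bound_on_windows:
  fixes f :: "real \<Rightarrow> real" and x a :: "nat \<Rightarrow> real"
  assumes d: "d \<ge> 4" and f: "continuous_on UNIV f" "\<And>t. 0 \<le> f t"
    and S: "finite S" and \<delta>: "0 < \<delta>" and c: "0 \<le> c" and x: "mono x"
    and windows: "\<And>k. k \<in> S \<Longrightarrow> x k \<le> a k \<and> a k + \<delta> \<le> x (Suc k)"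
    and bulk: "\<And>k t. k \<in> S \<Longrightarrow> a k < t \<Longrightarrow> t < a k + \<delta> \<Longrightarrow> \<bar>sqrt (real d) * t\<bar> \<le> 1"
    and lower: "\<And>k t. k \<in> S \<Longrightarrow> a k < t \<Longrightarrow> t < a k + \<delta> \<Longrightarrow> c \<le> f t"
  shows "real (card S) * (mu_const d / 2 * c) * \<delta> \<le> integral\<^sup>L (mu d) f"
proof -
  define F where "F t = indicator {-1..1} t * mu_dens d t * f t" for t
  note F_integral = integral_mu_eq_lborel[OF d f(1), folded F_def]
  have "mu_const d / 2 * c \<le> F t" if "k \<in> S" "a k < t" "t < a k + \<delta>" for k t
    unfolding F_def using mu_weight_lower_bound[OF _ bulk[OF that]] lower[OF that] mu_const_pos[of d] d c
    by (intro mult_mono) auto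
  moreover have "0 \<le> F t" for t
    unfolding F_def using mu_dens_nonneg[of d t] f(2)[of t] d by (simp add: indicator_def)
  ultimately have "real (card S) * (mu_const d / 2 * c) * \<delta> \<le> integral\<^sup>L lborel F"
    using F_integral(1) mu_const_pos[of d] d c
    by (intro integral_lower_bound_on_windows[OF _ _ S \<delta> _ x windows]) auto
  then show ?thesis using F_integral(2) unfolding F_def by simp
qed

lemma integral_mu_psi_minus_poly_lower_bound:
  fixes p :: "real poly"
  assumes d: "d \<ge> 4" and p: "degree p < 2 * d"
  shows "1 / (96 * sqrt (8 * pi)) \<le> integral\<^sup>L (mu d) (\<lambda>t. (psi (3 * d) (sqrt (real d) * t) - poly p t)\<^sup>2)"
proof -
  define n where "n = 3 * d"
  define s where "s = sqrt (real d)"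
  define \<delta> where "\<delta> = 1 / (4 * real n * s)"
  have n: "n \<ge> 2" "real n = 3 * real d" unfolding n_def using d by auto
  have s: "s > 0" unfolding s_def using d by auto
  have \<delta>: "\<delta> > 0" unfolding \<delta>_def using n s by simp
  obtain S a where S: "S \<subseteq> {..<n - 1}" "n - 1 \<le> card S + (degree p - 1)"
    and a: "\<And>k. k \<in> S \<Longrightarrow> psi_cell n s k \<le> a k \<and> a k + \<delta> \<le> psi_cell n s (Suc k)"
    and far: "\<And>k t. k \<in> S \<Longrightarrow> a k < t \<Longrightarrow> t < a k + \<delta> \<Longrightarrow> 1/2 \<le> \<bar>psi n (s * t) - poly p t\<bar>"
    using psi_far_from_poly_on_many_windows[OF n(1) s(1), of p] unfolding \<delta>_def by blast
  have "\<bar>sqrt (real d) * t\<bar> \<le> 1" if "k \<in> S" "a k < t" "t < a k + \<delta>" for k t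
    unfolding s_def[symmetric] using S(1) a[of k] that
    by (intro psi_cell_in_bulk[OF n(1) _ s(1), where k = k]) auto
  moreover have "1/4 \<le> (psi n (s * t) - poly p t)\<^sup>2" if "k \<in> S" "a k < t" "t < a k + \<delta>" for k t
    using far[OF that] abs_le_square_iff[of "1/2" "psi n (s * t) - poly p t"]
    by (simp add: power2_eq_square)
  moreover have "continuous_on UNIV (\<lambda>t. (psi n (s * t) - poly p t)\<^sup>2)"
    using continuous_on_psi
    by (intro continuous_intros continuous_on_compose2[of UNIV "psi n" UNIV "\<lambda>t. s * t"]) auto
  moreover have "mono (psi_cell n s)" using strict_mono_psi_cell n s by (simp add: strict_mono_mono)
  ultimately have "real (card S) * (mu_const d / 2 * (1/4)) * \<delta>
      \<le> integral\<^sup>L (mu d) (\<lambda>t. (psi n (s * t) - poly p t)\<^sup>2)"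
    using d \<delta> a finite_subset[OF S(1)]
    by (intro integral_mu_lower_bound_on_windows[where x = "psi_cell n s" and a = a]) auto
  moreover have "1 / (96 * sqrt (8 * pi)) \<le> real (card S) * (mu_const d / 2 * (1/4)) * \<delta>"
  proof -
    have "1 / (96 * sqrt (8 * pi)) = (s / sqrt (8 * pi)) / (96 * s)" using s by simp
    also have "\<dots> \<le> mu_const d / (96 * s)"
      using mu_const_lower_bound[of d] d s unfolding s_def by (intro divide_right_mono) auto
    also have "\<dots> = real d * (mu_const d / 2 * (1/4)) * \<delta>"
      unfolding \<delta>_def n(2) using d s by (simp add: field_simps)
    also have "\<dots> \<le> real (card S) * (mu_const d / 2 * (1/4)) * \<delta>"
      using S(2) p mu_const_pos[of d] d \<delta> unfolding n_def by (intro mult_right_mono) auto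
    finally show ?thesis .
  qed
  ultimately show ?thesis unfolding n_def s_def by simp
qed

lemma reciprocal_5_e_pi_le: "1 / (5 * exp 1 * pi) \<le> sqrt (1 / (96 * sqrt (8 * pi)))"
proof -
  have "sqrt (8 * pi) \<le> sqrt 36" using pi_less_4 by (intro real_sqrt_le_mono) simp
  then have "sqrt (8 * pi) \<le> 6" by simp
  moreover have "(2::real) * 3 \<le> exp 1 * pi"
    using exp_ge_add_one_self[of 1] pi_gt3 by (intro mult_mono) auto
  then have "(6::real) * 6 \<le> (exp 1 * pi) * (exp 1 * pi)" by (intro mult_mono) auto
  ultimately have "96 * sqrt (8 * pi) \<le> 25 * (exp 1 * pi)\<^sup>2" by (simp add: power2_eq_square)
  then have "(1 / (5 * exp 1 * pi))\<^sup>2 \<le> 1 / (96 * sqrt (8 * pi))"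
    by (simp add: power2_eq_square field_simps)
  then show ?thesis by (rule real_le_rsqrt)
qed

theorem lemma9:
  shows "\<exists>d0::nat. \<forall>d\<ge>d0.
           A d (2 * d) (\<lambda>t. psi (3 * d) (sqrt (real d) * t)) \<ge> 1 / (5 * exp 1 * pi)"
proof (intro exI[of _ 4] allI impI)
  fix d :: nat assume d: "4 \<le> d"
  let ?g = "\<lambda>t. psi (3 * d) (sqrt (real d) * t)"
  show "A d (2 * d) ?g \<ge> 1 / (5 * exp 1 * pi)"
    unfolding A_def
  proof (rule cINF_greatest)
    show "{p :: real poly. degree p < 2 * d} \<noteq> {}" using d by (auto intro!: exI[of _ 0])
  next
    fix p :: "real poly" assume "p \<in> {p. degree p < 2 * d}"
    then have "sqrt (1 / (96 * sqrt (8 * pi))) \<le> sqrt (integral\<^sup>L (mu d) (\<lambda>t. (?g t - poly p t)\<^sup>2))"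
      using integral_mu_psi_minus_poly_lower_bound[OF d] by (simp add: real_sqrt_le_mono)
    then show "1 / (5 * exp 1 * pi) \<le> sqrt (integral\<^sup>L (mu d) (\<lambda>t. (?g t - poly p t)\<^sup>2))"
      using reciprocal_5_e_pi_le by linarith
  qed
qed

end
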